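(* Assume $V=L$. Let $\zeta\in\Xi$, $X\in\mathrm{IPS}_\zeta$, and let $i\neq j$ be elements of $\zeta$. Then there is $Z\in\mathrm{IPS}_\zeta$ with $Z\subseteq X$, $Z$ clopen in $X$, such that $\{z(i):z\in Z\}\cap\{z(j):z\in Z\}=\varnothing$.
   Context: $T$ is the set of all nonempty finite sequences of countable ordinals, ordered by strict extension $\subset$. $\Xi$ is the set of all at most countable $\xi\subseteq T$ closed downward under $\subset$. $D=2^\omega$; $D^\xi$ is the product of $\xi$ copies of $D$ with the product topology; for $\eta\subseteq\xi$ and $x\in D^\xi$, $x\restriction\eta$ is the restriction. For $\zeta\in\Xi$, $\mathrm{IPS}_\zeta$ is the set of all $X\subseteq D^\zeta$ for which there is a homeomorphism $H$ of $D^\zeta$ onto $X$ such that for all $x_0,x_1\in D^\zeta$ and all $\xi\in\Xi$, $\xi\subseteq\zeta$: $x_0\restriction\xi=x_1\restriction\xi\iff H(x_0)\restriction\xi=H(x_1)\restriction\xi$. *)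

theory Defs
  imports "HOL-Analysis.Analysis" "HOL-Library.Sublist"
begin

text \<open>Nodes of the tree T: nonempty finite sequences of labels (type 'a stands for
  the countable ordinals), ordered by strict extension (strict prefix).\<close>
definition T_set :: "'a list set" where
  "T_set = {s. s \<noteq> []}"

definition Xi :: "'a list set set" where
  "Xi = {xi. xi \<subseteq> T_set \<and> countable xi \<and>
            (\<forall>t\<in>xi. \<forall>s\<in>T_set. strict_prefix s t \<longrightarrow> s \<in> xi)}"

definition D_top :: "(nat \<Rightarrow> bool) topology" where
  "D_top = product_topology (\<lambda>_. discrete_topology UNIV) UNIV"

definition Dpow :: "'a list set \<Rightarrow> ('a list \<Rightarrow> nat \<Rightarrow> bool) topology" where
  "Dpow zeta = product_topology (\<lambda>_. D_top) zeta"

definition IPS :: "'a list set \<Rightarrow> ('a list \<Rightarrow> nat \<Rightarrow> bool) set set" where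
  "IPS zeta = {X. X \<subseteq> topspace (Dpow zeta) \<and>
     (\<exists>H. homeomorphic_map (Dpow zeta) (subtopology (Dpow zeta) X) H \<and>
       (\<forall>x0\<in>topspace (Dpow zeta). \<forall>x1\<in>topspace (Dpow zeta).
          \<forall>xi\<in>Xi. xi \<subseteq> zeta \<longrightarrow>
            (restrict x0 xi = restrict x1 xi \<longleftrightarrow> restrict (H x0) xi = restrict (H x1) xi)))}"

end

theory Submission
  imports Defs
begin

(* Let H witness X \<in> IPS zeta and say j is not a prefix of i. Since H preserves agreement
  on the downward closed sets of prefixes of i and of j, the coordinates H x i and H x j cannot
  coincide for every x: otherwise flipping the j-th coordinate of a point would leave both
  H x i and the values of H x on the strict prefixes of j unchanged, hence also H x j, which
  contradicts injectivity on the prefixes of j. Fix x0 and a bit n with H x0 i n \<noteq> H x0 j n.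
  By continuity of H these two bits are constant on a basic clopen cylinder C around x0, so
  Z = H ` C is clopen in X with disjoint i- and j-projections. Finally C is copied onto the whole of D^zeta by
  shifting the constrained coordinates, and this shift acts on each coordinate separately,
  so composing it with H shows Z \<in> IPS zeta. *)

lemma topspace_D_top [simp]: "topspace D_top = UNIV"
  by (simp add: D_top_def)

lemma topspace_Dpow: "topspace (Dpow zeta) = extensional zeta"
  by (auto simp: Dpow_def PiE_def)

lemma continuous_map_Dpow_bit:
  assumes "k \<in> zeta"
  shows "continuous_map (Dpow zeta) (discrete_topology UNIV) (\<lambda>x. x k m)"
proof -
  have "continuous_map (Dpow zeta) D_top (\<lambda>x. x k)"
    unfolding Dpow_def using assms by (rule continuous_map_product_projection)
  moreover have "continuous_map D_top (discrete_topology UNIV) (\<lambda>y. y m)"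
    unfolding D_top_def by (rule continuous_map_product_projection) simp
  ultimately show ?thesis
    using continuous_map_compose by (fastforce simp: o_def)
qed

lemma continuous_map_into_Dpow:
  assumes "\<And>x. x \<in> topspace X \<Longrightarrow> f x \<in> extensional zeta"
    and "\<And>k m. k \<in> zeta \<Longrightarrow> continuous_map X (discrete_topology UNIV) (\<lambda>x. f x k m)"
  shows "continuous_map X (Dpow zeta) f"
  using assms
  by (auto simp: Dpow_def D_top_def continuous_map_componentwise continuous_map_componentwise_UNIV)

lemma open_D_top_contains_cylinder:
  assumes "openin D_top V" "y0 \<in> V"
  shows "\<exists>M. \<forall>y. (\<forall>m<M. y m = y0 m) \<longrightarrow> y \<in> V"
proof -
  obtain U where U: "finite {m. U m \<noteq> UNIV}" "y0 \<in> Pi\<^sub>E UNIV U" "Pi\<^sub>E UNIV U \<subseteq> V"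
    using assms unfolding D_top_def openin_product_topology_alt by auto
  obtain M where M: "{m. U m \<noteq> UNIV} \<subseteq> {..<M}"
    using finite_nat_bounded[OF U(1)] by blast
  have "y \<in> V" if y: "\<forall>m<M. y m = y0 m" for y
  proof -
    have "y m \<in> U m" for m
    proof (cases "m < M")
      case True
      then show ?thesis using y U(2) by (auto simp: PiE_iff)
    next
      case False
      then show ?thesis using M by auto
    qed
    then have "y \<in> Pi\<^sub>E UNIV U" by (simp add: PiE_iff)
    then show ?thesis using U(3) by blast
  qed
  then show ?thesis by blast
qed

definition cylinder ::
    "'a list set \<Rightarrow> 'a list set \<Rightarrow> nat \<Rightarrow> ('a list \<Rightarrow> nat \<Rightarrow> bool) \<Rightarrow> ('a list \<Rightarrow> nat \<Rightarrow> bool) set"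
  where "cylinder zeta F N x0 = {x \<in> topspace (Dpow zeta). \<forall>k\<in>F. \<forall>m<N. x k m = x0 k m}"

lemma
  assumes "finite F" "F \<subseteq> zeta"
  shows openin_cylinder: "openin (Dpow zeta) (cylinder zeta F N x0)"
    and closedin_cylinder: "closedin (Dpow zeta) (cylinder zeta F N x0)"
proof -
  define S where "S = (\<lambda>(k, m). {x \<in> topspace (Dpow zeta). x k m \<in> {x0 k m}})"
  have cyl: "cylinder zeta F N x0 = (\<Inter>p \<in> F \<times> {..<N}. S p) \<inter> topspace (Dpow zeta)"
    by (auto simp: cylinder_def S_def)
  have S: "openin (Dpow zeta) (S p)" "closedin (Dpow zeta) (S p)" if p: "p \<in> F \<times> {..<N}" for p
  proof -
    obtain k m where p: "p = (k, m)" "k \<in> zeta"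
      using p assms(2) by auto
    note bit = continuous_map_Dpow_bit[OF p(2), of m]
    show "openin (Dpow zeta) (S p)"
      using openin_continuous_map_preimage[OF bit, of "{x0 k m}"] by (simp add: S_def p)
    show "closedin (Dpow zeta) (S p)"
      using closedin_continuous_map_preimage[OF bit, of "{x0 k m}"] by (simp add: S_def p)
  qed
  show "openin (Dpow zeta) (cylinder zeta F N x0)"
    unfolding cyl using assms(1) S(1) by (intro openin_INT) auto
  show "closedin (Dpow zeta) (cylinder zeta F N x0)"
  proof (cases "F \<times> {..<N} = {}")
    case True
    then show ?thesis unfolding cyl True by simp
  next
    case False
    then show ?thesis unfolding cyl using S(2) by (intro closedin_Int closedin_INT) auto
  qed
qed

lemma open_Dpow_contains_cylinder:
  assumes "openin (Dpow zeta) W" "x0 \<in> W"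
  obtains F N where "finite F" "F \<subseteq> zeta" "cylinder zeta F N x0 \<subseteq> W"
proof -
  have "\<exists>U. finite {k \<in> zeta. U k \<noteq> topspace D_top} \<and> (\<forall>k\<in>zeta. openin D_top (U k)) \<and>
      x0 \<in> Pi\<^sub>E zeta U \<and> Pi\<^sub>E zeta U \<subseteq> W"
    using assms unfolding Dpow_def openin_product_topology_alt by blast
  then obtain U where U: "finite {k \<in> zeta. U k \<noteq> UNIV}" "\<forall>k\<in>zeta. openin D_top (U k)"
      "x0 \<in> Pi\<^sub>E zeta U" "Pi\<^sub>E zeta U \<subseteq> W"
    by auto
  define F where "F = {k \<in> zeta. U k \<noteq> UNIV}"
  have "\<exists>M. \<forall>y. (\<forall>m<M. y m = x0 k m) \<longrightarrow> y \<in> U k" if "k \<in> F" for k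
  proof (rule open_D_top_contains_cylinder)
    show "openin D_top (U k)" "x0 k \<in> U k"
      using U(2,3) that by (auto simp: F_def)
  qed
  then obtain M where M: "\<And>k y. k \<in> F \<Longrightarrow> \<forall>m<M k. y m = x0 k m \<Longrightarrow> y \<in> U k"
    by metis
  define N where "N = (\<Sum>k\<in>F. M k)"
  have MN: "M k \<le> N" if "k \<in> F" for k
    unfolding N_def using U(1) that by (simp add: F_def member_le_sum)
  have "x \<in> Pi\<^sub>E zeta U" if x: "x \<in> cylinder zeta F N x0" for x
  proof -
    have "x k \<in> U k" if "k \<in> zeta" for k
    proof (cases "k \<in> F")
      case True
      with x MN[OF True] show ?thesis
        by (intro M) (auto simp: cylinder_def)
    next
      case False
      with that show ?thesis by (simp add: F_def)
    qed
    with x show ?thesis by (simp add: cylinder_def topspace_Dpow PiE_iff)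
  qed
  with U(1,4) show ?thesis
    by (intro that[of F N]) (auto simp: F_def)
qed

lemma cylinder_separating_coordinates:
  assumes H: "continuous_map (Dpow zeta) (Dpow zeta) H"
    and "i \<in> zeta" "j \<in> zeta" "x0 \<in> topspace (Dpow zeta)" "H x0 i \<noteq> H x0 j"
  obtains F N where "finite F" "F \<subseteq> zeta"
    "\<And>x y. x \<in> cylinder zeta F N x0 \<Longrightarrow> y \<in> cylinder zeta F N x0 \<Longrightarrow> H x i \<noteq> H y j"
proof -
  obtain n where n: "H x0 i n \<noteq> H x0 j n"
    using assms(5) by (auto simp: fun_eq_iff)
  define W where "W = {x \<in> topspace (Dpow zeta). H x i n \<in> {H x0 i n}}
                     \<inter> {x \<in> topspace (Dpow zeta). H x j n \<in> {H x0 j n}}"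
  have "continuous_map (Dpow zeta) (discrete_topology UNIV) (\<lambda>x. H x k n)" if "k \<in> zeta" for k
    using continuous_map_compose[OF H continuous_map_Dpow_bit[OF that]] by (simp add: o_def)
  then have "openin (Dpow zeta) W"
    unfolding W_def using assms(2,3) by (intro openin_Int openin_continuous_map_preimage) auto
  moreover have "x0 \<in> W"
    using assms(4) by (simp add: W_def)
  ultimately obtain F N where F: "finite F" "F \<subseteq> zeta" and W: "cylinder zeta F N x0 \<subseteq> W"
    by (rule open_Dpow_contains_cylinder)
  show ?thesis
  proof (rule that[OF F])
    fix x y assume "x \<in> cylinder zeta F N x0" "y \<in> cylinder zeta F N x0"
    then have "H x i n \<noteq> H y j n"
      using W n by (auto simp: W_def)
    then show "H x i \<noteq> H y j" by metis
  qed
qed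

definition cylinder_shift ::
    "'a list set \<Rightarrow> 'a list set \<Rightarrow> nat \<Rightarrow> ('a list \<Rightarrow> nat \<Rightarrow> bool)
      \<Rightarrow> ('a list \<Rightarrow> nat \<Rightarrow> bool) \<Rightarrow> ('a list \<Rightarrow> nat \<Rightarrow> bool)"
  where "cylinder_shift zeta F N x0 x =
    restrict (\<lambda>k. if k \<in> F then (\<lambda>m. if m < N then x0 k m else x k (m - N)) else x k) zeta"

definition cylinder_unshift ::
    "'a list set \<Rightarrow> 'a list set \<Rightarrow> nat \<Rightarrow> ('a list \<Rightarrow> nat \<Rightarrow> bool) \<Rightarrow> ('a list \<Rightarrow> nat \<Rightarrow> bool)"
  where "cylinder_unshift zeta F N z = restrict (\<lambda>k. if k \<in> F then (\<lambda>m. z k (m + N)) else z k) zeta"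

lemma continuous_map_cylinder_shift:
  "continuous_map (Dpow zeta) (Dpow zeta) (cylinder_shift zeta F N x0)"
proof (rule continuous_map_into_Dpow)
  fix k m assume k: "k \<in> zeta"
  show "continuous_map (Dpow zeta) (discrete_topology UNIV) (\<lambda>x. cylinder_shift zeta F N x0 x k m)"
  proof (cases "k \<in> F \<and> m < N")
    case True
    then show ?thesis using k by (simp add: cylinder_shift_def)
  next
    case False
    then have "(\<lambda>x. cylinder_shift zeta F N x0 x k m) = (\<lambda>x. x k (if k \<in> F then m - N else m))"
      using k by (auto simp: cylinder_shift_def)
    then show ?thesis using continuous_map_Dpow_bit[OF k] by simp
  qed
qed (simp add: cylinder_shift_def)

lemma continuous_map_cylinder_unshift:
  "continuous_map (Dpow zeta) (Dpow zeta) (cylinder_unshift zeta F N)"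
proof (rule continuous_map_into_Dpow)
  fix k m assume k: "k \<in> zeta"
  have "(\<lambda>x. cylinder_unshift zeta F N x k m) = (\<lambda>x. x k (if k \<in> F then m + N else m))"
    using k by (auto simp: cylinder_unshift_def)
  then show "continuous_map (Dpow zeta) (discrete_topology UNIV) (\<lambda>x. cylinder_unshift zeta F N x k m)"
    using continuous_map_Dpow_bit[OF k] by simp
qed (simp add: cylinder_unshift_def)

lemma homeomorphic_map_cylinder_shift:
  assumes "F \<subseteq> zeta"
  shows "homeomorphic_map (Dpow zeta) (subtopology (Dpow zeta) (cylinder zeta F N x0))
           (cylinder_shift zeta F N x0)"
  unfolding homeomorphic_map_maps homeomorphic_maps_def
proof (intro exI[of _ "cylinder_unshift zeta F N"] conjI ballI)
  have "cylinder_shift zeta F N x0 x \<in> cylinder zeta F N x0" for x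
    using assms by (auto simp: cylinder_def cylinder_shift_def topspace_Dpow)
  then show "continuous_map (Dpow zeta) (subtopology (Dpow zeta) (cylinder zeta F N x0))
               (cylinder_shift zeta F N x0)"
    using continuous_map_cylinder_shift by (intro continuous_map_into_subtopology) auto
  show "continuous_map (subtopology (Dpow zeta) (cylinder zeta F N x0)) (Dpow zeta)
          (cylinder_unshift zeta F N)"
    using continuous_map_cylinder_unshift by (rule continuous_map_from_subtopology)
  fix x assume "x \<in> topspace (Dpow zeta)"
  then show "cylinder_unshift zeta F N (cylinder_shift zeta F N x0 x) = x"
    by (auto simp: topspace_Dpow cylinder_shift_def cylinder_unshift_def extensional_def fun_eq_iff)
next
  fix z assume "z \<in> topspace (subtopology (Dpow zeta) (cylinder zeta F N x0))"
  then have "z \<in> extensional zeta" "\<forall>k\<in>F. \<forall>m<N. z k m = x0 k m"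
    by (auto simp: cylinder_def topspace_Dpow)
  with assms show "cylinder_shift zeta F N x0 (cylinder_unshift zeta F N z) = z"
    by (auto simp: cylinder_shift_def cylinder_unshift_def extensional_def fun_eq_iff)
qed

definition restriction_preserving ::
    "'a list set \<Rightarrow> (('a list \<Rightarrow> nat \<Rightarrow> bool) \<Rightarrow> ('a list \<Rightarrow> nat \<Rightarrow> bool)) \<Rightarrow> bool"
  where "restriction_preserving zeta H \<longleftrightarrow>
    (\<forall>x0\<in>topspace (Dpow zeta). \<forall>x1\<in>topspace (Dpow zeta). \<forall>xi\<in>Xi. xi \<subseteq> zeta \<longrightarrow>
       (restrict x0 xi = restrict x1 xi \<longleftrightarrow> restrict (H x0) xi = restrict (H x1) xi))"

lemma IPS_iff:
  "X \<in> IPS zeta \<longleftrightarrow> X \<subseteq> topspace (Dpow zeta) \<and>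
     (\<exists>H. homeomorphic_map (Dpow zeta) (subtopology (Dpow zeta) X) H \<and> restriction_preserving zeta H)"
  by (simp add: IPS_def restriction_preserving_def)

lemma restriction_preserving_compose:
  assumes "restriction_preserving zeta G" "restriction_preserving zeta H"
    and "G ` topspace (Dpow zeta) \<subseteq> topspace (Dpow zeta)"
  shows "restriction_preserving zeta (H \<circ> G)"
  unfolding restriction_preserving_def
proof (intro ballI impI)
  fix x0 x1 xi assume x: "x0 \<in> topspace (Dpow zeta)" "x1 \<in> topspace (Dpow zeta)"
    and xi: "xi \<in> Xi" "xi \<subseteq> zeta"
  have "restrict x0 xi = restrict x1 xi \<longleftrightarrow> restrict (G x0) xi = restrict (G x1) xi"
    using assms(1) x xi unfolding restriction_preserving_def by blast
  also have "\<dots> \<longleftrightarrow> restrict (H (G x0)) xi = restrict (H (G x1)) xi"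
    using assms(2,3) x xi unfolding restriction_preserving_def by blast
  finally show "restrict x0 xi = restrict x1 xi \<longleftrightarrow> restrict ((H \<circ> G) x0) xi = restrict ((H \<circ> G) x1) xi"
    by simp
qed

lemma restriction_preserving_cylinder_shift:
  "restriction_preserving zeta (cylinder_shift zeta F N x0)"
  unfolding restriction_preserving_def
proof (intro ballI impI)
  fix x y :: "'a list \<Rightarrow> nat \<Rightarrow> bool" and xi assume xi: "xi \<subseteq> zeta"
  let ?s = "cylinder_shift zeta F N x0"
  have "?s x k = ?s y k \<longleftrightarrow> x k = y k" if "k \<in> xi" for k
  proof
    assume e: "?s x k = ?s y k"
    have "x k m = y k m" for m
      using fun_cong[OF e, of "if k \<in> F then m + N else m"] xi that
      by (auto simp: cylinder_shift_def split: if_splits)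
    then show "x k = y k" by blast
  qed (use xi that in \<open>simp add: cylinder_shift_def\<close>)
  then show "restrict x xi = restrict y xi \<longleftrightarrow> restrict (?s x) xi = restrict (?s y) xi"
    by (auto simp: restrict_def fun_eq_iff)
qed

lemma cylinder_in_IPS:
  assumes "F \<subseteq> zeta"
  shows "cylinder zeta F N x0 \<in> IPS zeta"
  unfolding IPS_iff
proof
  show "cylinder zeta F N x0 \<subseteq> topspace (Dpow zeta)"
    by (auto simp: cylinder_def)
  show "\<exists>G. homeomorphic_map (Dpow zeta) (subtopology (Dpow zeta) (cylinder zeta F N x0)) G \<and>
      restriction_preserving zeta G"
    using homeomorphic_map_cylinder_shift[OF assms] restriction_preserving_cylinder_shift by blast
qed

lemma IPS_image:
  assumes H: "homeomorphic_map (Dpow zeta) (subtopology (Dpow zeta) X) H"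
    "restriction_preserving zeta H"
    and "C \<in> IPS zeta"
  shows "H ` C \<in> IPS zeta"
proof -
  obtain G where G: "homeomorphic_map (Dpow zeta) (subtopology (Dpow zeta) C) G"
      "restriction_preserving zeta G" and C: "C \<subseteq> topspace (Dpow zeta)"
    using \<open>C \<in> IPS zeta\<close> by (auto simp: IPS_iff)
  have HC: "H ` C \<subseteq> topspace (Dpow zeta) \<inter> X"
    using homeomorphic_imp_surjective_map[OF H(1)] C by auto
  have "homeomorphic_map (subtopology (Dpow zeta) C) (subtopology (subtopology (Dpow zeta) X) (H ` C)) H"
    using C HC by (intro homeomorphic_map_subtopologies[OF H(1)]) auto
  then have "homeomorphic_map (subtopology (Dpow zeta) C) (subtopology (Dpow zeta) (H ` C)) H"
    using HC by (simp add: subtopology_subtopology Int_absorb1)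
  then have "homeomorphic_map (Dpow zeta) (subtopology (Dpow zeta) (H ` C)) (H \<circ> G)"
    by (rule homeomorphic_map_compose[OF G(1)])
  moreover have "G ` topspace (Dpow zeta) \<subseteq> topspace (Dpow zeta)"
    using homeomorphic_imp_surjective_map[OF G(1)] by auto
  ultimately show ?thesis
    using HC G(2) H(2) by (auto simp: IPS_iff intro!: restriction_preserving_compose)
qed

lemma Xi_prefix_closed:
  assumes "zeta \<in> Xi" "s \<in> zeta" "t \<noteq> []" "prefix t s"
  shows "t \<in> zeta"
  using assms by (cases "t = s") (auto simp: Xi_def T_set_def strict_prefix_def)

lemma prefixes_in_Xi: "{t. t \<noteq> [] \<and> prefix t s} \<in> Xi"
proof -
  have "finite {t. t \<noteq> [] \<and> prefix t s}"
    by (rule finite_subset[of _ "set (prefixes s)"]) auto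
  then show ?thesis
    by (auto simp: Xi_def T_set_def countable_finite strict_prefix_def intro: prefix_order.trans)
qed

lemma strict_prefixes_in_Xi: "{t. t \<noteq> [] \<and> strict_prefix t s} \<in> Xi"
proof -
  have "finite {t. t \<noteq> [] \<and> strict_prefix t s}"
    by (rule finite_subset[of _ "set (prefixes s)"]) (auto simp: strict_prefix_def)
  then show ?thesis
    by (auto simp: Xi_def T_set_def countable_finite intro: prefix_order.less_trans)
qed

lemma restriction_preserving_separates_non_prefix:
  assumes zeta: "zeta \<in> Xi" and "i \<in> zeta" "j \<in> zeta" "\<not> prefix j i"
    and H: "restriction_preserving zeta H"
  shows "\<exists>x\<in>topspace (Dpow zeta). H x i \<noteq> H x j"
proof (rule ccontr)
  assume "\<not> ?thesis"
  then have same: "H x i = H x j" if "x \<in> topspace (Dpow zeta)" for x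
    using that by blast
  define x :: "'a list \<Rightarrow> nat \<Rightarrow> bool" where "x = restrict (\<lambda>_ _. False) zeta"
  define x' where "x' = x(j := (\<lambda>_. True))"
  have x: "x \<in> topspace (Dpow zeta)" "x' \<in> topspace (Dpow zeta)"
    using \<open>j \<in> zeta\<close> by (auto simp: topspace_Dpow x_def x'_def extensional_def)
  have agree: "restrict x xi = restrict x' xi \<longleftrightarrow> restrict (H x) xi = restrict (H x') xi"
    if "xi \<in> Xi" "xi \<subseteq> zeta" for xi
    using H x that by (simp add: restriction_preserving_def)
  define A where "A = {t. t \<noteq> [] \<and> prefix t i}"
  define B where "B = {t. t \<noteq> [] \<and> strict_prefix t j}"
  define B' where "B' = {t. t \<noteq> [] \<and> prefix t j}"
  have Xi: "A \<in> Xi" "B \<in> Xi" "B' \<in> Xi"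
    by (simp_all add: A_def B_def B'_def prefixes_in_Xi strict_prefixes_in_Xi)
  have subsets: "A \<subseteq> zeta" "B \<subseteq> zeta" "B' \<subseteq> zeta"
    using Xi_prefix_closed[OF zeta \<open>i \<in> zeta\<close>] Xi_prefix_closed[OF zeta \<open>j \<in> zeta\<close>]
    by (auto simp: A_def B_def B'_def strict_prefix_def)
  have "i \<noteq> []" "j \<noteq> []"
    using zeta \<open>i \<in> zeta\<close> \<open>j \<in> zeta\<close> by (auto simp: Xi_def T_set_def)
  then have "i \<in> A" "B' = insert j B"
    by (auto simp: A_def B_def B'_def strict_prefix_def)
  have "restrict x A = restrict x' A"
    using \<open>\<not> prefix j i\<close> by (auto simp: A_def x'_def restrict_def)
  then have "H x i = H x' i"
    using agree[OF Xi(1) subsets(1)] \<open>i \<in> A\<close> by (metis restrict_apply')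
  then have hj: "H x j = H x' j"
    using same[OF x(1)] same[OF x(2)] by simp
  have "restrict x B = restrict x' B"
    by (auto simp: B_def x'_def restrict_def)
  then have hB: "restrict (H x) B = restrict (H x') B"
    using agree[OF Xi(2) subsets(2)] by blast
  have "restrict (H x) B' = restrict (H x') B'"
  proof (rule ext)
    fix s show "restrict (H x) B' s = restrict (H x') B' s"
      using fun_cong[OF hB, of s] hj unfolding \<open>B' = insert j B\<close> by (cases "s \<in> B") auto
  qed
  then have "restrict x B' j = restrict x' B' j"
    using agree[OF Xi(3) subsets(3)] by simp
  then have "x j = x' j"
    using \<open>B' = insert j B\<close> by simp
  then show False
    using \<open>j \<in> zeta\<close> by (auto simp: x_def x'_def fun_eq_iff)
qed

lemma restriction_preserving_separates:
  assumes "zeta \<in> Xi" "i \<in> zeta" "j \<in> zeta" "i \<noteq> j" "restriction_preserving zeta H"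
  shows "\<exists>x\<in>topspace (Dpow zeta). H x i \<noteq> H x j"
proof (cases "prefix j i")
  case False
  with assms show ?thesis by (intro restriction_preserving_separates_non_prefix)
next
  case True
  with assms have "\<not> prefix i j" using prefix_order.antisym by blast
  with assms show ?thesis using restriction_preserving_separates_non_prefix[of zeta j i H] by metis
qed

theorem corollary2p22:
  fixes zeta :: "'a list set" and X :: "('a list \<Rightarrow> nat \<Rightarrow> bool) set"
  assumes "zeta \<in> Xi" and "X \<in> IPS zeta"
    and "i \<in> zeta" and "j \<in> zeta" and "i \<noteq> j"
  shows "\<exists>Z\<in>IPS zeta. Z \<subseteq> X \<and>
           openin (subtopology (Dpow zeta) X) Z \<and> closedin (subtopology (Dpow zeta) X) Z \<and>
           (\<lambda>z. z i) ` Z \<inter> (\<lambda>z. z j) ` Z = {}"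
proof -
  obtain H where H: "homeomorphic_map (Dpow zeta) (subtopology (Dpow zeta) X) H"
      "restriction_preserving zeta H"
    using assms(2) by (auto simp: IPS_iff)
  obtain x0 where x0: "x0 \<in> topspace (Dpow zeta)" "H x0 i \<noteq> H x0 j"
    using restriction_preserving_separates[OF assms(1,3-5) H(2)] by blast
  have "continuous_map (Dpow zeta) (Dpow zeta) H"
    using homeomorphic_imp_continuous_map[OF H(1)] continuous_map_in_subtopology by blast
  obtain F N where F: "finite F" "F \<subseteq> zeta"
    and sep: "\<And>x y. x \<in> cylinder zeta F N x0 \<Longrightarrow> y \<in> cylinder zeta F N x0 \<Longrightarrow> H x i \<noteq> H y j"
    using cylinder_separating_coordinates[OF \<open>continuous_map (Dpow zeta) (Dpow zeta) H\<close> assms(3,4) x0]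
    by blast
  define C where "C = cylinder zeta F N x0"
  have C: "C \<subseteq> topspace (Dpow zeta)" "openin (Dpow zeta) C" "closedin (Dpow zeta) C"
    using openin_cylinder[OF F] closedin_cylinder[OF F] by (auto simp: C_def cylinder_def)
  have "H ` C \<in> IPS zeta"
    unfolding C_def using H F(2) by (intro IPS_image cylinder_in_IPS)
  moreover have "H ` C \<subseteq> X"
    using homeomorphic_imp_surjective_map[OF H(1)] C(1) by auto
  moreover have "openin (subtopology (Dpow zeta) X) (H ` C)" "closedin (subtopology (Dpow zeta) X) (H ` C)"
    using C homeomorphic_map_openness_eq[OF H(1), of C] homeomorphic_map_closedness_eq[OF H(1), of C]
    by simp_all
  moreover have "(\<lambda>z. z i) ` H ` C \<inter> (\<lambda>z. z j) ` H ` C = {}"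
    using sep by (auto simp: C_def)
  ultimately show ?thesis by blast
qed

end
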